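(* Let $G_n=H_0H_1\cdots H_{n-1}$ be a spiro hexagonal chain with $n$ hexagons, and let $c_k$ be the common cut-vertex of $H_{k-1}$ and $H_k$, $1\le k\le n-1$. Then $$W(G_n)=5\sum_{k=1}^{n-1}\sum_{i=1}^{k}f(c_i)+\frac{45}{2}n^2+\frac{9}{2}n=5\sum_{k=1}^{n-1}(n-k)f(c_k)+\frac{45}{2}n^2+\frac{9}{2}n,$$ where $f(c_1)=9$ and, for $k\ge2$, $f(c_k)=5(k-1)+9$ if $c_k$ is $o_{k-1}$, $f(c_k)=10(k-1)+9$ if $c_k$ is $m_{k-1}$, and $f(c_k)=15(k-1)+9$ if $c_k$ is $p_{k-1}$.
   Context: All graphs are simple and connected; $d(u,v)$ is the shortest-path distance, and the Wiener index is $W(G)=\sum_{\{u,v\}\subseteq V(G)}d_G(u,v)$. A spiro hexagonal chain of length $n$, $G_n=H_0H_1\cdots H_{n-1}$, is a connected graph in which every block is a hexagon (6-cycle) $H_0,\dots,H_{n-1}$, each hexagon has at most two cut-vertices, each cut-vertex is shared by exactly two hexagons, and for $k=1,\dots,n-1$ the hexagons $H_{k-1}$ and $H_k$ share the cut-vertex $c_k$. For $k\ge1$, a vertex of $H_k$ at distance $1$, $2$, $3$ from $c_k$ is called an ortho-, meta-, para-vertex of $H_k$, denoted $o_k,m_k,p_k$ respectively. For $2\le k\le n-1$, $c_k$ is a vertex of $H_{k-1}$ different from $c_{k-1}$, hence one of $o_{k-1},m_{k-1},p_{k-1}$. *)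

theory Defs
  imports Main "HOL.Real"
begin

fun is_walk :: "('a \<Rightarrow> 'a \<Rightarrow> bool) \<Rightarrow> 'a list \<Rightarrow> bool" where
  "is_walk adj [] = False"
| "is_walk adj [x] = True"
| "is_walk adj (x # y # xs) = (adj x y \<and> is_walk adj (y # xs))"

definition dist :: "('a \<Rightarrow> 'a \<Rightarrow> bool) \<Rightarrow> 'a \<Rightarrow> 'a \<Rightarrow> nat" where
  "dist adj u v = (LEAST m. \<exists>xs. is_walk adj xs \<and> hd xs = u \<and> last xs = v \<and> length xs = m + 1)"

text \<open>Wiener index: sum of d(u,v) over unordered pairs {u,v} of distinct vertices.\<close>
definition wiener :: "'a set \<Rightarrow> ('a \<Rightarrow> 'a \<Rightarrow> bool) \<Rightarrow> real" where
  "wiener V adj = (\<Sum>P\<in>{P. \<exists>u\<in>V. \<exists>v\<in>V. u \<noteq> v \<and> P = {u, v}}.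
                      real (dist adj (SOME u. u \<in> P) (SOME v. v \<in> P - {SOME u. u \<in> P})))"

definition spiro_hex_chain ::
  "'a set \<Rightarrow> ('a \<Rightarrow> 'a \<Rightarrow> bool) \<Rightarrow> nat \<Rightarrow> (nat \<Rightarrow> nat \<Rightarrow> 'a) \<Rightarrow> (nat \<Rightarrow> 'a) \<Rightarrow> bool" where
  "spiro_hex_chain V adj n H c \<longleftrightarrow>
     n \<ge> 1 \<and>
     (\<forall>k<n. inj_on (H k) {..<6}) \<and>
     V = (\<Union>k<n. H k ` {..<6}) \<and>
     (\<forall>u v. adj u v \<longleftrightarrow> (\<exists>k<n. \<exists>i<6. {u, v} = {H k i, H k ((i + 1) mod 6)})) \<and>
     (\<forall>k. 1 \<le> k \<and> k < n \<longrightarrow> H (k - 1) ` {..<6} \<inter> H k ` {..<6} = {c k}) \<and>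
     (\<forall>j k. j < n \<and> k < n \<and> j + 2 \<le> k \<longrightarrow> H j ` {..<6} \<inter> H k ` {..<6} = {})"

text \<open>The weight f(c_k): f(c_1) = 9; for k \<ge> 2, c_k is the ortho/meta/para vertex of H_{k-1}
  according as its distance from c_{k-1} is 1/2/3.\<close>
definition fc :: "('a \<Rightarrow> 'a \<Rightarrow> bool) \<Rightarrow> (nat \<Rightarrow> 'a) \<Rightarrow> nat \<Rightarrow> real" where
  "fc adj c k =
     (if k = 1 then 9
      else if dist adj (c (k - 1)) (c k) = 1 then 5 * (real k - 1) + 9
      else if dist adj (c (k - 1)) (c k) = 2 then 10 * (real k - 1) + 9
      else if dist adj (c (k - 1)) (c k) = 3 then 15 * (real k - 1) + 9
      else undefined)"

end

theory Submission
  imports Defs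
begin

text \<open>Build the chain one hexagon at a time. The new hexagon \<open>H\<^sub>m\<close> meets
  \<open>H\<^sub>0 \<dots> H\<^sub>m\<^sub>-\<^sub>1\<close> only in \<open>c\<^sub>m\<close>, so distances inside either part are
  unchanged and distances between the parts split at \<open>c\<^sub>m\<close>. Every vertex of a hexagon has
  transmission \<open>1+2+3+2+1 = 9\<close>; writing \<open>W\<^sub>m\<close> for the sum of all ordered distances and
  \<open>D\<^sub>m\<close> for the transmission of \<open>c\<^sub>m\<close> in \<open>H\<^sub>0 \<dots> H\<^sub>m\<^sub>-\<^sub>1\<close>, this gives
  \<open>W\<^sub>m\<^sub>+\<^sub>1 = W\<^sub>m + 10 D\<^sub>m + 90m + 54\<close> and
  \<open>D\<^sub>m\<^sub>+\<^sub>1 = D\<^sub>m + 5m d(c\<^sub>m, c\<^sub>m\<^sub>+\<^sub>1) + 9 = D\<^sub>m + f(c\<^sub>m\<^sub>+\<^sub>1)\<close>.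
  Hence \<open>D\<^sub>m\<close> is a partial sum of the \<open>f(c\<^sub>i)\<close>, and \<open>W(G\<^sub>n) = W\<^sub>n / 2\<close> is the
  stated double sum.\<close>

section \<open>Walks and distance\<close>

definition reachable :: "('a \<Rightarrow> 'a \<Rightarrow> bool) \<Rightarrow> 'a \<Rightarrow> 'a \<Rightarrow> bool" where
  "reachable R u v \<longleftrightarrow> (\<exists>xs. is_walk R xs \<and> hd xs = u \<and> last xs = v)"

lemma is_walk_nonempty: "is_walk R xs \<Longrightarrow> xs \<noteq> []"
  by (cases xs) auto

lemma is_walk_Cons: "ys \<noteq> [] \<Longrightarrow> is_walk R (x # ys) \<longleftrightarrow> R x (hd ys) \<and> is_walk R ys"
  by (cases ys) auto

lemma is_walk_mono: "is_walk R xs \<Longrightarrow> (\<And>u v. R u v \<Longrightarrow> S u v) \<Longrightarrow> is_walk S xs"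
  by (induction R xs rule: is_walk.induct) auto

lemma dist_le_walk_length:
  assumes "is_walk R xs" "hd xs = u" "last xs = v"
  shows "dist R u v \<le> length xs - 1"
proof -
  have "xs \<noteq> []" using assms(1) by (rule is_walk_nonempty)
  then have "\<exists>ys. is_walk R ys \<and> hd ys = u \<and> last ys = v \<and> length ys = (length xs - 1) + 1"
    using assms by (intro exI[of _ xs]) auto
  then show ?thesis unfolding dist_def by (rule Least_le)
qed

lemma shortest_walk_exists:
  assumes "reachable R u v"
  obtains xs where "is_walk R xs" "hd xs = u" "last xs = v" "length xs = dist R u v + 1"
proof -
  obtain xs where xs: "is_walk R xs" "hd xs = u" "last xs = v"
    using assms unfolding reachable_def by blast
  have "xs \<noteq> []" using xs(1) by (rule is_walk_nonempty)
  then have "\<exists>m ys. is_walk R ys \<and> hd ys = u \<and> last ys = v \<and> length ys = m + 1"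
    using xs by (intro exI[of _ "length xs - 1"] exI[of _ xs]) simp
  then have "\<exists>ys. is_walk R ys \<and> hd ys = u \<and> last ys = v \<and> length ys = dist R u v + 1"
    unfolding dist_def by (rule LeastI_ex)
  with that show ?thesis by blast
qed

lemma dist_self: "dist R u u = 0"
  using dist_le_walk_length[of R "[u]" u u] by simp

lemma is_walk_append:
  assumes "is_walk R xs" "is_walk R ys" "last xs = hd ys"
  shows "is_walk R (xs @ tl ys)"
  using assms
proof (induction xs)
  case (Cons x xs)
  have "ys \<noteq> []" using Cons.prems(2) by (rule is_walk_nonempty)
  then show ?case
    using Cons by (cases xs) (auto simp: is_walk_Cons)
qed simp

lemma is_walk_join:
  assumes "is_walk R xs" "is_walk R ys" "last xs = hd ys"
  obtains zs where "is_walk R zs" "hd zs = hd xs" "last zs = last ys"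
    "length zs = length xs + length ys - 1"
proof
  have ne: "xs \<noteq> []" "ys \<noteq> []" using assms(1,2) by (simp_all add: is_walk_nonempty)
  show "is_walk R (xs @ tl ys)" using assms by (rule is_walk_append)
  show "hd (xs @ tl ys) = hd xs" using ne(1) by simp
  show "last (xs @ tl ys) = last ys"
    using ne assms(3) by (cases ys) (auto simp: last_append)
  show "length (xs @ tl ys) = length xs + length ys - 1" using ne(2) by (cases ys) auto
qed

lemma reachable_trans:
  assumes "reachable R u v" "reachable R v w"
  shows "reachable R u w"
proof -
  obtain xs ys where "is_walk R xs" "hd xs = u" "last xs = v" "is_walk R ys" "hd ys = v" "last ys = w"
    using assms unfolding reachable_def by blast
  then show ?thesis unfolding reachable_def by (metis is_walk_join)
qed

lemma dist_triangle:
  assumes "reachable R u v" "reachable R v w"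
  shows "dist R u w \<le> dist R u v + dist R v w"
proof -
  obtain xs where xs: "is_walk R xs" "hd xs = u" "last xs = v" "length xs = dist R u v + 1"
    using shortest_walk_exists[OF assms(1)] .
  obtain ys where ys: "is_walk R ys" "hd ys = v" "last ys = w" "length ys = dist R v w + 1"
    using shortest_walk_exists[OF assms(2)] .
  obtain zs where "is_walk R zs" "hd zs = u" "last zs = w" "length zs = length xs + length ys - 1"
    using is_walk_join[OF xs(1) ys(1)] xs ys by metis
  with xs(4) ys(4) show ?thesis using dist_le_walk_length[of R zs u w] by simp
qed

lemma reachable_mono: "reachable R u v \<Longrightarrow> (\<And>u v. R u v \<Longrightarrow> S u v) \<Longrightarrow> reachable S u v"
  unfolding reachable_def using is_walk_mono by blast

lemma is_walk_rev: "(\<And>u v. R u v \<Longrightarrow> R v u) \<Longrightarrow> is_walk R xs \<Longrightarrow> is_walk R (rev xs)"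
proof (induction R xs rule: is_walk.induct)
  case (3 R x y xs)
  have "is_walk R (rev (y # xs))" "is_walk R [y, x]" using 3 by simp_all
  from is_walk_append[OF this] show ?case by simp
qed auto

lemma reachable_sym:
  assumes sym: "\<And>u v. R u v \<Longrightarrow> R v u" and "reachable R u v"
  shows "reachable R v u"
proof -
  obtain xs where xs: "is_walk R xs" "hd xs = u" "last xs = v"
    using assms(2) unfolding reachable_def by blast
  have "xs \<noteq> []" using xs(1) by (rule is_walk_nonempty)
  then show ?thesis
    unfolding reachable_def using xs is_walk_rev[OF sym xs(1)] by (auto simp: hd_rev last_rev)
qed

lemma dist_sym_le:
  assumes sym: "\<And>u v. R u v \<Longrightarrow> R v u" and "reachable R u v"
  shows "dist R v u \<le> dist R u v"
proof -
  obtain xs where xs: "is_walk R xs" "hd xs = u" "last xs = v" "length xs = dist R u v + 1"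
    using shortest_walk_exists[OF assms(2)] .
  have "xs \<noteq> []" using xs(1) by (rule is_walk_nonempty)
  then have "dist R v u \<le> length (rev xs) - 1"
    using xs is_walk_rev[OF sym xs(1)] by (intro dist_le_walk_length) (auto simp: hd_rev last_rev)
  then show ?thesis using xs(4) by simp
qed

lemma dist_sym:
  assumes sym: "\<And>u v. R u v \<Longrightarrow> R v u"
  shows "dist R u v = dist R v u"
proof (cases "reachable R u v")
  case True
  then have "reachable R v u" using reachable_sym[of R] sym by blast
  with True show ?thesis using dist_sym_le[of R, OF sym] by (meson le_antisym)
next
  case False
  \<comment> \<open>both distances are then the junk value \<open>LEAST m. False\<close>\<close>
  then have "\<not> reachable R v u" using reachable_sym[of R] sym by blast
  with False show ?thesis unfolding dist_def reachable_def by metis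
qed

lemma is_walk_drop_stutter:
  "is_walk (\<lambda>u v. R u v \<or> u = v) xs \<Longrightarrow>
   \<exists>ys. is_walk R ys \<and> hd ys = hd xs \<and> last ys = last xs \<and> length ys \<le> length xs"
proof (induction "\<lambda>u v. R u v \<or> u = v" xs rule: is_walk.induct)
  case (2 x) then show ?case by (intro exI[of _ "[x]"]) auto
next
  case (3 x y xs)
  then obtain ys where ys: "is_walk R ys" "hd ys = y" "last ys = last (y # xs)"
      "length ys \<le> length (y # xs)"
    by auto
  have ne: "ys \<noteq> []" using ys(1) by (rule is_walk_nonempty)
  show ?case
  proof (cases "x = y")
    case True then show ?thesis using ys by (intro exI[of _ ys]) auto
  next
    case False
    then have "is_walk R (x # ys)" using 3 ys ne by (simp add: is_walk_Cons)
    then show ?thesis using ys ne by (intro exI[of _ "x # ys"]) auto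
  qed
qed simp

section \<open>Distances across a cut-vertex\<close>

text \<open>If every edge lies in \<open>A\<close> or in \<open>B\<close> and \<open>A \<inter> B = {c}\<close>, collapsing \<open>B\<close>
  onto \<open>c\<close> maps walks to walks inside \<open>A\<close>, up to stutter.\<close>

definition retract :: "'a set \<Rightarrow> 'a \<Rightarrow> 'a \<Rightarrow> 'a" where
  "retract A c x = (if x \<in> A then x else c)"

lemma is_walk_retract:
  assumes split: "\<And>x y. R x y \<Longrightarrow> (x \<in> A \<and> y \<in> A) \<or> (x \<in> B \<and> y \<in> B)"
    and cut: "A \<inter> B = {c}"
  shows "is_walk R xs \<Longrightarrow>
    is_walk (\<lambda>u v. (R u v \<and> u \<in> A \<and> v \<in> A) \<or> u = v) (map (retract A c) xs)"
proof (induction xs rule: induct_list012)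
  case (3 x y xs)
  then have xy: "R x y" "is_walk R (y # xs)" by simp_all
  have step: "(R (retract A c x) (retract A c y) \<and> retract A c x \<in> A \<and> retract A c y \<in> A)
    \<or> retract A c x = retract A c y"
  proof (cases "x \<in> A \<and> y \<in> A")
    case False
    then have "x \<in> B" "y \<in> B" using split[OF xy(1)] by blast+
    then have "retract A c x = c" "retract A c y = c" using cut by (auto simp: retract_def)
    then show ?thesis by simp
  qed (use xy in \<open>simp add: retract_def\<close>)
  have "is_walk (\<lambda>u v. (R u v \<and> u \<in> A \<and> v \<in> A) \<or> u = v) (map (retract A c) (y # xs))"
    using "3.IH"(2)[OF xy(2)] .
  with step show ?case by simp
qed simp_all

lemma dist_restrict_block:
  assumes split: "\<And>x y. R x y \<Longrightarrow> (x \<in> A \<and> y \<in> A) \<or> (x \<in> B \<and> y \<in> B)"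
    and cut: "A \<inter> B = {c}"
    and uv: "u \<in> A" "v \<in> A"
    and reach: "reachable (\<lambda>x y. R x y \<and> x \<in> A \<and> y \<in> A) u v"
  shows "dist R u v = dist (\<lambda>x y. R x y \<and> x \<in> A \<and> y \<in> A) u v"
proof (rule le_antisym)
  let ?RA = "\<lambda>x y. R x y \<and> x \<in> A \<and> y \<in> A"
  obtain xs where xs: "is_walk ?RA xs" "hd xs = u" "last xs = v" "length xs = dist ?RA u v + 1"
    using shortest_walk_exists[OF reach] .
  have "is_walk R xs" using is_walk_mono[OF xs(1)] by blast
  from dist_le_walk_length[OF this xs(2,3)] xs(4) show "dist R u v \<le> dist ?RA u v" by simp
  have "reachable R u v" using reachable_mono[OF reach] by blast
  then obtain ys where ys: "is_walk R ys" "hd ys = u" "last ys = v" "length ys = dist R u v + 1"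
    by (rule shortest_walk_exists)
  have ne: "ys \<noteq> []" using ys(1) by (rule is_walk_nonempty)
  obtain zs where zs: "is_walk ?RA zs" "hd zs = hd (map (retract A c) ys)"
      "last zs = last (map (retract A c) ys)" "length zs \<le> length (map (retract A c) ys)"
    using is_walk_drop_stutter[OF is_walk_retract[OF split cut ys(1)]] by blast
  have "hd zs = u" "last zs = v" using zs ys ne uv by (auto simp: hd_map last_map retract_def)
  from dist_le_walk_length[OF zs(1) this] zs(4) ys(4)
  show "dist ?RA u v \<le> dist R u v" by simp
qed

lemma is_walk_passes_cut:
  assumes split: "\<And>x y. R x y \<Longrightarrow> (x \<in> A \<and> y \<in> A) \<or> (x \<in> B \<and> y \<in> B)"
    and cut: "A \<inter> B = {c}"
  shows "is_walk R xs \<Longrightarrow> hd xs \<in> A \<Longrightarrow> last xs \<in> B \<Longrightarrow> c \<in> set xs"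
proof (induction xs rule: induct_list012)
  case (3 x y xs)
  show ?case
  proof (cases "x = c")
    case False
    have xy: "R x y" "is_walk R (y # xs)" "x \<in> A" "last (y # xs) \<in> B"
      using "3.prems" by simp_all
    then have "x \<notin> B" using False cut by blast
    then have "y \<in> A" using split[OF xy(1)] xy(3) by blast
    then show ?thesis using "3.IH"(2) xy by simp
  qed simp
next
  case (2 x)
  then show ?case using cut by auto
qed simp

lemma is_walk_split_at:
  "is_walk R xs \<Longrightarrow> c \<in> set xs \<Longrightarrow> \<exists>ys zs. is_walk R ys \<and> is_walk R zs \<and> hd ys = hd xs
     \<and> last ys = c \<and> hd zs = c \<and> last zs = last xs \<and> length ys + length zs = length xs + 1"
proof (induction R xs rule: is_walk.induct)
  case (2 R x) then show ?case by (intro exI[of _ "[x]"]) auto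
next
  case (3 R x y xs)
  show ?case
  proof (cases "x = c")
    case True then show ?thesis using 3 by (intro exI[of _ "[x]"] exI[of _ "x # y # xs"]) auto
  next
    case False
    then obtain ys zs where yz: "is_walk R ys" "is_walk R zs" "hd ys = y" "last ys = c"
      "hd zs = c" "last zs = last (y # xs)" "length ys + length zs = length (y # xs) + 1"
      using 3 by auto
    have ne: "ys \<noteq> []" using yz(1) by (rule is_walk_nonempty)
    have "is_walk R (x # ys)" using yz ne 3 by (simp add: is_walk_Cons)
    then show ?thesis using yz ne by (intro exI[of _ "x # ys"] exI[of _ zs]) auto
  qed
qed simp

lemma dist_through_cut:
  assumes split: "\<And>x y. R x y \<Longrightarrow> (x \<in> A \<and> y \<in> A) \<or> (x \<in> B \<and> y \<in> B)"
    and cut: "A \<inter> B = {c}"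
    and uv: "u \<in> A" "v \<in> B"
    and reach: "reachable R u c" "reachable R c v"
  shows "dist R u v = dist R u c + dist R c v"
proof (rule le_antisym)
  show "dist R u v \<le> dist R u c + dist R c v" using reach by (rule dist_triangle)
  obtain zs where zs: "is_walk R zs" "hd zs = u" "last zs = v" "length zs = dist R u v + 1"
    using shortest_walk_exists[OF reachable_trans[OF reach]] .
  have "c \<in> set zs" using is_walk_passes_cut[OF split cut zs(1)] zs uv by simp
  then obtain ys' zs' where s: "is_walk R ys'" "is_walk R zs'" "hd ys' = u" "last ys' = c"
     "hd zs' = c" "last zs' = v" "length ys' + length zs' = length zs + 1"
    using is_walk_split_at[OF zs(1)] unfolding zs(2,3) by blast
  have "dist R u c \<le> length ys' - 1" "dist R c v \<le> length zs' - 1"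
    using dist_le_walk_length[OF s(1,3,4)] dist_le_walk_length[OF s(2,5,6)] by simp_all
  moreover have "0 < length ys'" "0 < length zs'" using s(1,2) by (simp_all add: is_walk_nonempty)
  ultimately show "dist R u c + dist R c v \<le> dist R u v" using s(7) zs(4) by linarith
qed

section \<open>The Wiener index as a sum of transmissions\<close>

definition transmission :: "'a set \<Rightarrow> ('a \<Rightarrow> 'a \<Rightarrow> bool) \<Rightarrow> 'a \<Rightarrow> real" where
  "transmission V R x = (\<Sum>u\<in>V. real (dist R u x))"

lemma dist_of_doubleton:
  assumes sym: "\<And>u v. dist R u v = dist R v u" and "a \<noteq> b"
  shows "dist R (SOME u. u \<in> {a, b}) (SOME v. v \<in> {a, b} - {SOME u. u \<in> {a, b}}) = dist R a b"
proof -
  define s where "s = (SOME u. u \<in> {a, b})"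
  have s: "s \<in> {a, b}" unfolding s_def by (rule someI[of _ a]) simp
  define t where "t = (SOME v. v \<in> {a, b} - {s})"
  have "\<exists>v. v \<in> {a, b} - {s}" using s \<open>a \<noteq> b\<close> by auto
  then have "t \<in> {a, b} - {s}" unfolding t_def by (rule someI_ex)
  then have "dist R s t = dist R a b" using s sym by auto
  then show ?thesis unfolding s_def t_def .
qed

lemma wiener_eq_half_transmission_sum:
  assumes fin: "finite V" and sym: "\<And>u v. dist R u v = dist R v u"
  shows "wiener V R = (\<Sum>x\<in>V. transmission V R x) / 2"
proof -
  define S where "S = {p \<in> V \<times> V. fst p \<noteq> snd p}"
  define PS where "PS = {P. \<exists>u\<in>V. \<exists>v\<in>V. u \<noteq> v \<and> P = {u, v}}"
  define f where "f = (\<lambda>p::'a \<times> 'a. real (dist R (fst p) (snd p)))"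
  define val where
    "val = (\<lambda>P::'a set. real (dist R (SOME u. u \<in> P) (SOME v. v \<in> P - {SOME u. u \<in> P})))"
  have finVV: "finite (V \<times> V)" using fin by simp
  have finPS: "finite PS" using finite_subset[of PS "Pow V"] fin unfolding PS_def by auto
  have "(\<Sum>x\<in>V. transmission V R x) = (\<Sum>u\<in>V. \<Sum>v\<in>V. real (dist R u v))"
    unfolding transmission_def by (rule sum.swap)
  also have "\<dots> = (\<Sum>p\<in>V \<times> V. f p)"
    unfolding f_def by (simp add: sum.cartesian_product case_prod_beta)
  also have "\<dots> = (\<Sum>p\<in>S. f p)"
    by (rule sum.mono_neutral_right[OF finVV]) (auto simp: S_def f_def dist_self)
  also have "\<dots> = (\<Sum>P\<in>PS. \<Sum>p\<in>{p \<in> S. {fst p, snd p} = P}. f p)"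
    by (rule sum.group[symmetric]) (use finVV finPS in \<open>force simp: S_def PS_def\<close>)+
  also have "\<dots> = (\<Sum>P\<in>PS. 2 * val P)"
  proof (rule sum.cong[OF refl])
    fix P assume "P \<in> PS"
    then obtain a b where ab: "a \<in> V" "b \<in> V" "a \<noteq> b" "P = {a, b}" unfolding PS_def by blast
    have "{p \<in> S. {fst p, snd p} = P} = {(a, b), (b, a)}"
      using ab unfolding S_def by (auto simp: doubleton_eq_iff)
    then show "(\<Sum>p\<in>{p \<in> S. {fst p, snd p} = P}. f p) = 2 * val P"
      using ab dist_of_doubleton[OF sym ab(3)] sym[of b a] by (simp add: f_def val_def)
  qed
  also have "\<dots> = 2 * wiener V R" unfolding wiener_def val_def PS_def by (simp add: sum_distrib_left)
  finally show ?thesis by simp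
qed

section \<open>The hexagon\<close>

definition hex_verts :: "(nat \<Rightarrow> 'a) \<Rightarrow> 'a set" where
  "hex_verts h = h ` {..<6}"

definition hex_adj :: "(nat \<Rightarrow> 'a) \<Rightarrow> 'a \<Rightarrow> 'a \<Rightarrow> bool" where
  "hex_adj h u v \<longleftrightarrow> (\<exists>i<6. {u, v} = {h i, h ((i + 1) mod 6)})"

definition cyc_dist :: "nat \<Rightarrow> nat \<Rightarrow> nat" where
  "cyc_dist i j = min ((j + 6 - i) mod 6) ((i + 6 - j) mod 6)"

fun hex_walk :: "(nat \<Rightarrow> 'a) \<Rightarrow> nat \<Rightarrow> nat \<Rightarrow> 'a list" where
  "hex_walk h i 0 = [h i]"
| "hex_walk h i (Suc s) = h i # hex_walk h ((i + 1) mod 6) s"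

lemma finite_hex_verts [simp]: "finite (hex_verts h)"
  by (simp add: hex_verts_def)

lemma less_6_cases: "(a::nat) < 6 \<Longrightarrow> a = 0 \<or> a = 1 \<or> a = 2 \<or> a = 3 \<or> a = 4 \<or> a = 5"
  by arith

lemma cyc_dist_self [simp]: "cyc_dist i i = 0"
  by (simp add: cyc_dist_def)

lemma cyc_dist_commute: "cyc_dist i j = cyc_dist j i"
  by (simp add: cyc_dist_def min.commute)

lemma cyc_dist_le_succ: "i < 6 \<Longrightarrow> j < 6 \<Longrightarrow> cyc_dist i j \<le> cyc_dist ((i + 1) mod 6) j + 1"
  using less_6_cases[of i] less_6_cases[of j] by (auto simp: cyc_dist_def)

lemma cyc_dist_succ_le: "i < 6 \<Longrightarrow> j < 6 \<Longrightarrow> cyc_dist ((i + 1) mod 6) j \<le> cyc_dist i j + 1"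
  using less_6_cases[of i] less_6_cases[of j] by (auto simp: cyc_dist_def)

lemma cyc_dist_neq:
  "i < 6 \<Longrightarrow> j < 6 \<Longrightarrow> i \<noteq> j \<Longrightarrow> cyc_dist i j \<in> {1, 2, 3}"
  using less_6_cases[of i] less_6_cases[of j] by (auto simp: cyc_dist_def)

lemma sum_cyc_dist:
  assumes "i < 6" shows "(\<Sum>j<6. cyc_dist i j) = 9"
proof -
  have "(\<Sum>j<6. cyc_dist i j) =
      cyc_dist i 0 + cyc_dist i 1 + cyc_dist i 2 + cyc_dist i 3 + cyc_dist i 4 + cyc_dist i 5"
    by (simp add: eval_nat_numeral)
  then show ?thesis using less_6_cases[OF assms] by (auto simp: cyc_dist_def)
qed

lemma hex_adj_sym: "hex_adj h u v \<Longrightarrow> hex_adj h v u"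
  unfolding hex_adj_def by (auto simp: insert_commute)

lemma hex_dist_sym: "dist (hex_adj h) u v = dist (hex_adj h) v u"
  by (rule dist_sym) (rule hex_adj_sym)

lemma hex_adj_in_hex_verts: "hex_adj h u v \<Longrightarrow> u \<in> hex_verts h \<and> v \<in> hex_verts h"
  unfolding hex_adj_def hex_verts_def by (auto simp: doubleton_eq_iff)

lemma hex_walk:
  "i < 6 \<Longrightarrow> is_walk (hex_adj h) (hex_walk h i s) \<and> hd (hex_walk h i s) = h i
   \<and> last (hex_walk h i s) = h ((i + s) mod 6) \<and> length (hex_walk h i s) = s + 1"
proof (induction s arbitrary: i)
  case (Suc s)
  have "hex_adj h (h i) (h ((i + 1) mod 6))" unfolding hex_adj_def using Suc.prems by blast
  then show ?case using Suc.IH[of "(i + 1) mod 6"]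
    by (auto simp: is_walk_Cons mod_add_left_eq)
qed simp

lemma hex_walk_between:
  assumes "i < 6" "j < 6"
  obtains xs where "is_walk (hex_adj h) xs" "hd xs = h i" "last xs = h j"
    "length xs = (j + 6 - i) mod 6 + 1"
proof -
  have "(i + (j + 6 - i) mod 6) mod 6 = j" using assms by (simp add: mod_add_right_eq)
  then show ?thesis using hex_walk[OF assms(1), of h "(j + 6 - i) mod 6"]
    by (intro that[of "hex_walk h i ((j + 6 - i) mod 6)"]) simp_all
qed

lemma hex_reachable:
  assumes "u \<in> hex_verts h" "v \<in> hex_verts h" shows "reachable (hex_adj h) u v"
proof -
  obtain i j where "i < 6" "j < 6" "u = h i" "v = h j" using assms unfolding hex_verts_def by blast
  moreover from hex_walk_between[OF \<open>i < 6\<close> \<open>j < 6\<close>] obtain xs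
    where "is_walk (hex_adj h) xs" "hd xs = h i" "last xs = h j" .
  ultimately show ?thesis unfolding reachable_def by blast
qed

lemma hex_dist_le_cyc_dist:
  assumes "i < 6" "j < 6" shows "dist (hex_adj h) (h i) (h j) \<le> cyc_dist i j"
proof -
  have forward: "dist (hex_adj h) (h i) (h j) \<le> (j + 6 - i) mod 6" if ij: "i < 6" "j < 6" for i j
  proof -
    obtain xs where "is_walk (hex_adj h) xs" "hd xs = h i" "last xs = h j"
        "length xs = (j + 6 - i) mod 6 + 1"
      using hex_walk_between[OF ij] .
    then show ?thesis using dist_le_walk_length[of "hex_adj h" xs "h i" "h j"] by simp
  qed
  have "dist (hex_adj h) (h i) (h j) \<le> (i + 6 - j) mod 6"
    using forward[OF assms(2,1)] hex_dist_sym[of h] by simp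
  then show ?thesis using forward[OF assms] unfolding cyc_dist_def by simp
qed

lemma cyc_dist_le_walk_length:
  assumes inj: "inj_on h {..<6}"
  shows "is_walk (hex_adj h) xs \<Longrightarrow> i < 6 \<Longrightarrow> hd xs = h i \<Longrightarrow> j < 6 \<Longrightarrow> last xs = h j
     \<Longrightarrow> cyc_dist i j \<le> length xs - 1"
proof (induction xs arbitrary: i rule: induct_list012)
  case (2 x)
  then have "i = j" using inj by (simp add: inj_on_eq_iff)
  then show ?case by simp
next
  case (3 x y xs)
  then have xy: "hex_adj h x y" "is_walk (hex_adj h) (y # xs)" "x = h i" "last (y # xs) = h j"
    by simp_all
  obtain a where a: "a < 6" "{x, y} = {h a, h ((a + 1) mod 6)}"
    using xy(1) unfolding hex_adj_def by blast
  have a': "(a + 1) mod 6 < 6" by simp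
  from a(2) consider "x = h a" "y = h ((a + 1) mod 6)" | "x = h ((a + 1) mod 6)" "y = h a"
    by (auto simp: doubleton_eq_iff)
  then show ?case
  proof cases
    case 1
    then have "i = a" using xy(3) inj a(1) "3.prems"(2) by (simp add: inj_on_eq_iff)
    moreover have "cyc_dist ((a + 1) mod 6) j \<le> length (y # xs) - 1"
      using "3.IH"(2)[OF xy(2) a'] 1 "3.prems" by simp
    ultimately show ?thesis using cyc_dist_le_succ[OF a(1) "3.prems"(4)] by simp
  next
    case 2
    then have "i = (a + 1) mod 6" using xy(3) inj a' "3.prems"(2) by (simp add: inj_on_eq_iff)
    moreover have "cyc_dist a j \<le> length (y # xs) - 1"
      using "3.IH"(2)[OF xy(2) a(1)] 2 "3.prems" by simp
    ultimately show ?thesis using cyc_dist_succ_le[OF a(1) "3.prems"(4)] by simp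
  qed
qed simp

lemma hex_dist:
  assumes "inj_on h {..<6}" "i < 6" "j < 6"
  shows "dist (hex_adj h) (h i) (h j) = cyc_dist i j"
proof (rule le_antisym)
  show "dist (hex_adj h) (h i) (h j) \<le> cyc_dist i j" using assms(2,3) by (rule hex_dist_le_cyc_dist)
  have "reachable (hex_adj h) (h i) (h j)"
    by (rule hex_reachable) (use assms in \<open>simp_all add: hex_verts_def\<close>)
  then obtain xs where "is_walk (hex_adj h) xs" "hd xs = h i" "last xs = h j"
      "length xs = dist (hex_adj h) (h i) (h j) + 1"
    by (rule shortest_walk_exists)
  with cyc_dist_le_walk_length[OF assms(1)] assms(2,3)
  show "cyc_dist i j \<le> dist (hex_adj h) (h i) (h j)" by fastforce
qed

lemma hex_dist_distinct:
  assumes "inj_on h {..<6}" "u \<in> hex_verts h" "v \<in> hex_verts h" "u \<noteq> v"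
  shows "dist (hex_adj h) u v \<in> {1, 2, 3}"
proof -
  obtain i j where "i < 6" "j < 6" "u = h i" "v = h j"
    using assms(2,3) unfolding hex_verts_def by blast
  moreover have "i \<noteq> j" using assms(4) calculation by blast
  ultimately show ?thesis using hex_dist[OF assms(1)] cyc_dist_neq by simp
qed

lemma transmission_hex:
  assumes inj: "inj_on h {..<6}" and x: "x \<in> hex_verts h"
  shows "transmission (hex_verts h) (hex_adj h) x = 9"
proof -
  obtain i where i: "i < 6" "x = h i" using x unfolding hex_verts_def by blast
  have "transmission (hex_verts h) (hex_adj h) x = (\<Sum>j<6. real (dist (hex_adj h) (h j) (h i)))"
    unfolding transmission_def hex_verts_def i(2) by (rule sum.reindex[OF inj, unfolded comp_def])
  also have "\<dots> = (\<Sum>j<6. real (cyc_dist i j))"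
    using i(1) hex_dist[OF inj] cyc_dist_commute by (intro sum.cong) auto
  also have "\<dots> = 9" using sum_cyc_dist[OF i(1)] by (simp flip: of_nat_sum)
  finally show ?thesis .
qed

section \<open>Spiro chains\<close>

definition chain_verts :: "(nat \<Rightarrow> nat \<Rightarrow> 'a) \<Rightarrow> nat \<Rightarrow> 'a set" where
  "chain_verts H m = (\<Union>k<m. hex_verts (H k))"

definition chain_adj :: "(nat \<Rightarrow> nat \<Rightarrow> 'a) \<Rightarrow> nat \<Rightarrow> 'a \<Rightarrow> 'a \<Rightarrow> bool" where
  "chain_adj H m u v \<longleftrightarrow> (\<exists>k<m. hex_adj (H k) u v)"

lemma chain_verts_Suc: "chain_verts H (Suc m) = chain_verts H m \<union> hex_verts (H m)"
  unfolding chain_verts_def by (auto simp: lessThan_Suc)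

lemma chain_adj_Suc: "chain_adj H (Suc m) u v \<longleftrightarrow> chain_adj H m u v \<or> hex_adj (H m) u v"
  unfolding chain_adj_def by (metis less_Suc_eq)

lemma chain_verts_1 [simp]: "chain_verts H (Suc 0) = hex_verts (H 0)"
  unfolding chain_verts_def by (simp add: lessThan_Suc)

lemma chain_adj_1 [simp]: "chain_adj H (Suc 0) = hex_adj (H 0)"
  unfolding chain_adj_def by simp

lemma chain_verts_mono: "m \<le> M \<Longrightarrow> chain_verts H m \<subseteq> chain_verts H M"
  unfolding chain_verts_def by (rule UN_mono) auto

lemma finite_chain_verts: "finite (chain_verts H m)"
  unfolding chain_verts_def by simp

lemma chain_adj_sym: "chain_adj H m u v \<Longrightarrow> chain_adj H m v u"
  unfolding chain_adj_def by (metis hex_adj_sym)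

lemma chain_dist_sym: "dist (chain_adj H m) u v = dist (chain_adj H m) v u"
  by (rule dist_sym) (rule chain_adj_sym)

lemma chain_adj_in_chain_verts: "chain_adj H m u v \<Longrightarrow> u \<in> chain_verts H m \<and> v \<in> chain_verts H m"
  unfolding chain_adj_def chain_verts_def by (meson UN_I hex_adj_in_hex_verts lessThan_iff)

lemma chain_adj_Suc_split:
  "chain_adj H (Suc m) u v \<Longrightarrow>
    (u \<in> chain_verts H m \<and> v \<in> chain_verts H m) \<or> (u \<in> hex_verts (H m) \<and> v \<in> hex_verts (H m))"
  unfolding chain_adj_Suc by (auto dest: chain_adj_in_chain_verts hex_adj_in_hex_verts)

locale spiro_chain =
  fixes N :: nat and H :: "nat \<Rightarrow> nat \<Rightarrow> 'a" and c :: "nat \<Rightarrow> 'a"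
  assumes hex_inj: "k < N \<Longrightarrow> inj_on (H k) {..<6}"
    and hex_cut: "1 \<le> k \<Longrightarrow> k < N \<Longrightarrow> hex_verts (H (k - 1)) \<inter> hex_verts (H k) = {c k}"
    and hex_disjoint: "j + 2 \<le> k \<Longrightarrow> k < N \<Longrightarrow> hex_verts (H j) \<inter> hex_verts (H k) = {}"
begin

lemma chain_verts_inter_hex:
  assumes "1 \<le> m" "m < N" shows "chain_verts H m \<inter> hex_verts (H m) = {c m}"
proof -
  have "hex_verts (H k) \<inter> hex_verts (H m) \<subseteq> {c m}" if "k < m" for k
    using hex_cut[OF assms] hex_disjoint[of k m] assms that
    by (cases "k = m - 1") auto
  moreover have "c m \<in> hex_verts (H (m - 1))" "c m \<in> hex_verts (H m)" using hex_cut[OF assms] by auto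
  ultimately show ?thesis unfolding chain_verts_def using assms(1) by fastforce
qed

lemma cut_vertex_mem:
  assumes "1 \<le> m" "m < N"
  shows "c m \<in> chain_verts H m" "c m \<in> hex_verts (H m)" "c m \<in> hex_verts (H (m - 1))"
  using chain_verts_inter_hex[OF assms] hex_cut[OF assms] by auto

lemma hex_adj_irrefl: "k < N \<Longrightarrow> \<not> hex_adj (H k) x x"
  unfolding hex_adj_def by (auto simp: inj_on_eq_iff[OF hex_inj] mod_Suc split: if_splits)

lemma chain_adj_irrefl: "m \<le> N \<Longrightarrow> \<not> chain_adj H m x x"
  unfolding chain_adj_def using hex_adj_irrefl by auto

lemma chain_adj_Suc_restrict_old:
  assumes "1 \<le> m" "m < N"
  shows "(\<lambda>x y. chain_adj H (Suc m) x y \<and> x \<in> chain_verts H m \<and> y \<in> chain_verts H m)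
    = chain_adj H m"
proof (intro ext iffI)
  fix x y assume xy: "chain_adj H (Suc m) x y \<and> x \<in> chain_verts H m \<and> y \<in> chain_verts H m"
  have "\<not> hex_adj (H m) x y"
  proof
    assume e: "hex_adj (H m) x y"
    then have "x \<in> chain_verts H m \<inter> hex_verts (H m)" "y \<in> chain_verts H m \<inter> hex_verts (H m)"
      using xy hex_adj_in_hex_verts[OF e] by simp_all
    then have "x = c m" "y = c m" unfolding chain_verts_inter_hex[OF assms] by simp_all
    with e show False using hex_adj_irrefl assms(2) by simp
  qed
  then show "chain_adj H m x y" using xy by (simp add: chain_adj_Suc)
next
  fix x y assume "chain_adj H m x y"
  then show "chain_adj H (Suc m) x y \<and> x \<in> chain_verts H m \<and> y \<in> chain_verts H m"
    by (simp add: chain_adj_Suc chain_adj_in_chain_verts)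
qed

lemma chain_adj_Suc_restrict_new:
  assumes "1 \<le> m" "m < N"
  shows "(\<lambda>x y. chain_adj H (Suc m) x y \<and> x \<in> hex_verts (H m) \<and> y \<in> hex_verts (H m))
    = hex_adj (H m)"
proof (intro ext iffI)
  fix x y assume xy: "chain_adj H (Suc m) x y \<and> x \<in> hex_verts (H m) \<and> y \<in> hex_verts (H m)"
  have "\<not> chain_adj H m x y"
  proof
    assume e: "chain_adj H m x y"
    then have "x \<in> chain_verts H m \<inter> hex_verts (H m)" "y \<in> chain_verts H m \<inter> hex_verts (H m)"
      using xy chain_adj_in_chain_verts[OF e] by simp_all
    then have "x = c m" "y = c m" unfolding chain_verts_inter_hex[OF assms] by simp_all
    with e show False using chain_adj_irrefl assms(2) by simp
  qed
  then show "hex_adj (H m) x y" using xy by (simp add: chain_adj_Suc)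
next
  fix x y assume "hex_adj (H m) x y"
  then show "chain_adj H (Suc m) x y \<and> x \<in> hex_verts (H m) \<and> y \<in> hex_verts (H m)"
    by (simp add: chain_adj_Suc hex_adj_in_hex_verts)
qed

lemma chain_reachable:
  "1 \<le> m \<Longrightarrow> m \<le> N \<Longrightarrow> u \<in> chain_verts H m \<Longrightarrow> v \<in> chain_verts H m
    \<Longrightarrow> reachable (chain_adj H m) u v"
proof (induction m arbitrary: u v rule: nat_induct_at_least)
  case base
  then show ?case by (simp add: hex_reachable)
next
  case (Suc m)
  have cm: "c m \<in> chain_verts H m" "c m \<in> hex_verts (H m)"
    using cut_vertex_mem Suc.hyps Suc.prems(1) by simp_all
  have to_cut: "reachable (chain_adj H (Suc m)) x (c m)" if "x \<in> chain_verts H (Suc m)" for x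
  proof (cases "x \<in> chain_verts H m")
    case True
    with cm(1) Suc.IH Suc.prems(1) have "reachable (chain_adj H m) x (c m)" by simp
    then show ?thesis by (rule reachable_mono) (simp add: chain_adj_Suc)
  next
    case False
    with that cm(2) have "reachable (hex_adj (H m)) x (c m)"
      unfolding chain_verts_Suc by (simp add: hex_reachable)
    then show ?thesis by (rule reachable_mono) (simp add: chain_adj_Suc)
  qed
  have "reachable (chain_adj H (Suc m)) (c m) v"
    by (rule reachable_sym[OF chain_adj_sym to_cut[OF Suc.prems(3)]])
  with to_cut[OF Suc.prems(2)] show ?case by (rule reachable_trans)
qed

lemma dist_chain_Suc_old:
  assumes "1 \<le> m" "m < N" "u \<in> chain_verts H m" "v \<in> chain_verts H m"
  shows "dist (chain_adj H (Suc m)) u v = dist (chain_adj H m) u v"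
proof -
  have "reachable (\<lambda>x y. chain_adj H (Suc m) x y \<and> x \<in> chain_verts H m \<and> y \<in> chain_verts H m) u v"
    unfolding chain_adj_Suc_restrict_old[OF assms(1,2)] using chain_reachable assms by simp
  from dist_restrict_block[OF chain_adj_Suc_split chain_verts_inter_hex[OF assms(1,2)] assms(3,4) this]
  show ?thesis unfolding chain_adj_Suc_restrict_old[OF assms(1,2)] .
qed

lemma dist_chain_Suc_new:
  assumes "1 \<le> m" "m < N" "u \<in> hex_verts (H m)" "v \<in> hex_verts (H m)"
  shows "dist (chain_adj H (Suc m)) u v = dist (hex_adj (H m)) u v"
proof -
  have split:
    "(x \<in> hex_verts (H m) \<and> y \<in> hex_verts (H m)) \<or> (x \<in> chain_verts H m \<and> y \<in> chain_verts H m)"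
    if "chain_adj H (Suc m) x y" for x y
    using chain_adj_Suc_split[OF that] by blast
  have cut: "hex_verts (H m) \<inter> chain_verts H m = {c m}" using chain_verts_inter_hex[OF assms(1,2)] by blast
  have "reachable (\<lambda>x y. chain_adj H (Suc m) x y \<and> x \<in> hex_verts (H m) \<and> y \<in> hex_verts (H m)) u v"
    unfolding chain_adj_Suc_restrict_new[OF assms(1,2)] using assms(3,4) by (rule hex_reachable)
  from dist_restrict_block[OF split cut assms(3,4) this]
  show ?thesis unfolding chain_adj_Suc_restrict_new[OF assms(1,2)] .
qed

lemma dist_chain_Suc_cross:
  assumes "1 \<le> m" "m < N" "u \<in> chain_verts H m" "v \<in> hex_verts (H m)"
  shows "dist (chain_adj H (Suc m)) u v = dist (chain_adj H m) u (c m) + dist (hex_adj (H m)) (c m) v"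
proof -
  note cm = cut_vertex_mem[OF assms(1,2)]
  have "u \<in> chain_verts H (Suc m)" "v \<in> chain_verts H (Suc m)" "c m \<in> chain_verts H (Suc m)"
    using assms(3,4) cm unfolding chain_verts_Suc by simp_all
  then have "reachable (chain_adj H (Suc m)) u (c m)" "reachable (chain_adj H (Suc m)) (c m) v"
    using chain_reachable[of "Suc m"] assms(1,2) by simp_all
  from dist_through_cut[OF chain_adj_Suc_split chain_verts_inter_hex[OF assms(1,2)] assms(3,4) this]
  show ?thesis using dist_chain_Suc_old[OF assms(1-3) cm(1)] dist_chain_Suc_new[OF assms(1,2) cm(2) assms(4)]
    by simp
qed

lemma dist_chain_mono:
  "m \<le> M \<Longrightarrow> 1 \<le> m \<Longrightarrow> M \<le> N \<Longrightarrow> u \<in> chain_verts H m \<Longrightarrow> v \<in> chain_verts H m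
    \<Longrightarrow> dist (chain_adj H M) u v = dist (chain_adj H m) u v"
proof (induction M rule: nat_induct_at_least)
  case (Suc M)
  have "chain_verts H m \<subseteq> chain_verts H M" using Suc.hyps(1) by (rule chain_verts_mono)
  then have "u \<in> chain_verts H M" "v \<in> chain_verts H M" using Suc.prems(3,4) by auto
  then show ?case using dist_chain_Suc_old[of M u v] Suc by simp
qed simp

lemma card_hex_verts: "k < N \<Longrightarrow> card (hex_verts (H k)) = 6"
  unfolding hex_verts_def using hex_inj by (simp add: card_image)

lemma card_chain_verts: "1 \<le> m \<Longrightarrow> m \<le> N \<Longrightarrow> card (chain_verts H m) = 5 * m + 1"
proof (induction m rule: nat_induct_at_least)
  case base then show ?case using card_hex_verts[of 0] by simp
next
  case (Suc m)
  have "card (chain_verts H m) + card (hex_verts (H m)) =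
      card (chain_verts H (Suc m)) + card (chain_verts H m \<inter> hex_verts (H m))"
    unfolding chain_verts_Suc by (rule card_Un_Int[OF finite_chain_verts finite_hex_verts])
  then show ?case using chain_verts_inter_hex card_hex_verts Suc by simp
qed

abbreviation chain_transmission :: "nat \<Rightarrow> 'a \<Rightarrow> real" where
  "chain_transmission m \<equiv> transmission (chain_verts H m) (chain_adj H m)"

lemma chain_verts_Suc_disjoint:
  assumes "1 \<le> m" "m < N"
  shows "chain_verts H (Suc m) = chain_verts H m \<union> (hex_verts (H m) - {c m})"
    and "chain_verts H m \<inter> (hex_verts (H m) - {c m}) = {}"
  using chain_verts_inter_hex[OF assms] cut_vertex_mem[OF assms] unfolding chain_verts_Suc by auto

lemma sum_chain_verts_Suc:
  assumes "1 \<le> m" "m < N"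
  shows "(\<Sum>x\<in>chain_verts H (Suc m). f x)
    = (\<Sum>x\<in>chain_verts H m. f x) + (\<Sum>x\<in>hex_verts (H m) - {c m}. f x)"
  unfolding chain_verts_Suc_disjoint(1)[OF assms]
  by (rule sum.union_disjoint) (simp_all add: finite_chain_verts chain_verts_Suc_disjoint(2)[OF assms])

lemma card_hex_verts_minus_cut: "1 \<le> m \<Longrightarrow> m < N \<Longrightarrow> card (hex_verts (H m) - {c m}) = 5"
  using card_hex_verts cut_vertex_mem by simp

lemma sum_hex_minus_cut:
  assumes "1 \<le> m" "m < N" "x \<in> hex_verts (H m)"
  shows "(\<Sum>u\<in>hex_verts (H m) - {c m}. real (dist (hex_adj (H m)) u x))
    = 9 - real (dist (hex_adj (H m)) (c m) x)"
  using sum_diff1[of "hex_verts (H m)" "\<lambda>u. real (dist (hex_adj (H m)) u x)" "c m"]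
    transmission_hex[OF hex_inj[OF assms(2)] assms(3)] cut_vertex_mem[OF assms(1,2)]
  by (simp add: transmission_def)

lemma transmission_chain_Suc_old:
  assumes m: "1 \<le> m" "m < N" and x: "x \<in> chain_verts H m"
  shows "chain_transmission (Suc m) x
    = chain_transmission m x + 5 * real (dist (chain_adj H m) (c m) x) + 9"
proof -
  note cm = cut_vertex_mem[OF m]
  have "chain_transmission (Suc m) x = (\<Sum>u\<in>chain_verts H m. real (dist (chain_adj H m) u x))
      + (\<Sum>u\<in>hex_verts (H m) - {c m}.
          real (dist (chain_adj H m) (c m) x) + real (dist (hex_adj (H m)) u (c m)))"
    unfolding transmission_def sum_chain_verts_Suc[OF m]
    using dist_chain_Suc_old[OF m _ x] dist_chain_Suc_cross[OF m x]
      chain_dist_sym[of H "Suc m" _ x] chain_dist_sym[of H m x] hex_dist_sym[of "H m"]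
    by (intro arg_cong2[where f = "(+)"] sum.cong) auto
  also have "\<dots> = chain_transmission m x + 5 * real (dist (chain_adj H m) (c m) x) + 9"
    using sum_hex_minus_cut[OF m cm(2)] card_hex_verts_minus_cut[OF m]
    by (simp add: sum.distrib transmission_def dist_self)
  finally show ?thesis .
qed

lemma transmission_chain_Suc_new:
  assumes m: "1 \<le> m" "m < N" and x: "x \<in> hex_verts (H m)"
  shows "chain_transmission (Suc m) x
    = chain_transmission m (c m) + 5 * real m * real (dist (hex_adj (H m)) (c m) x) + 9"
proof -
  have "chain_transmission (Suc m) x
      = (\<Sum>u\<in>chain_verts H m. real (dist (chain_adj H m) u (c m)) + real (dist (hex_adj (H m)) (c m) x))
      + (\<Sum>u\<in>hex_verts (H m) - {c m}. real (dist (hex_adj (H m)) u x))"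
    unfolding transmission_def sum_chain_verts_Suc[OF m]
    using dist_chain_Suc_cross[OF m _ x] dist_chain_Suc_new[OF m _ x]
    by (intro arg_cong2[where f = "(+)"] sum.cong) auto
  also have "\<dots> = chain_transmission m (c m) + 5 * real m * real (dist (hex_adj (H m)) (c m) x) + 9"
    using sum_hex_minus_cut[OF m x] card_chain_verts[OF m(1) less_imp_le[OF m(2)]]
    by (simp add: sum.distrib transmission_def algebra_simps)
  finally show ?thesis .
qed

lemma sum_transmission_chain_Suc:
  assumes m: "1 \<le> m" "m < N"
  shows "(\<Sum>x\<in>chain_verts H (Suc m). chain_transmission (Suc m) x)
    = (\<Sum>x\<in>chain_verts H m. chain_transmission m x) + 10 * chain_transmission m (c m) + 90 * real m + 54"
proof -
  note cm = cut_vertex_mem[OF m]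
  have "(\<Sum>x\<in>chain_verts H (Suc m). chain_transmission (Suc m) x)
    = (\<Sum>x\<in>chain_verts H m. chain_transmission m x + 5 * real (dist (chain_adj H m) x (c m)) + 9)
      + (\<Sum>x\<in>hex_verts (H m) - {c m}.
          chain_transmission m (c m) + 5 * real m * real (dist (hex_adj (H m)) x (c m)) + 9)"
    unfolding sum_chain_verts_Suc[OF m]
    using transmission_chain_Suc_old[OF m] transmission_chain_Suc_new[OF m]
      chain_dist_sym[of H m "c m"] hex_dist_sym[of "H m" "c m"]
    by (intro arg_cong2[where f = "(+)"] sum.cong) auto
  also have "\<dots> = (\<Sum>x\<in>chain_verts H m. chain_transmission m x)
      + 5 * (\<Sum>x\<in>chain_verts H m. real (dist (chain_adj H m) x (c m))) + 9 * card (chain_verts H m)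
      + card (hex_verts (H m) - {c m}) * (chain_transmission m (c m) + 9)
      + 5 * real m * (\<Sum>x\<in>hex_verts (H m) - {c m}. real (dist (hex_adj (H m)) x (c m)))"
    by (simp add: sum.distrib sum_distrib_left algebra_simps)
  also have "\<dots> = (\<Sum>x\<in>chain_verts H m. chain_transmission m x)
      + 10 * chain_transmission m (c m) + 90 * real m + 54"
    using sum_hex_minus_cut[OF m cm(2)] card_hex_verts_minus_cut[OF m]
      card_chain_verts[OF m(1) less_imp_le[OF m(2)]]
    by (simp add: transmission_def dist_self algebra_simps)
  finally show ?thesis .
qed

end

section \<open>Solving the recurrences\<close>

lemma fc_eq_dist:
  assumes "k \<noteq> 1" "dist adj (c (k - 1)) (c k) \<in> {1, 2, 3}"
  shows "fc adj c k = 5 * (real k - 1) * real (dist adj (c (k - 1)) (c k)) + 9"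
  using assms by (auto simp: fc_def)

lemma sum_partial_sums:
  "(\<Sum>k=1..n. \<Sum>i=1..k. F i) = (\<Sum>k=1..n. (real n + 1 - real k) * (F k :: real))"
proof (induction n)
  case (Suc n)
  have "(\<Sum>k=1..Suc n. (real (Suc n) + 1 - real k) * F k)
      = (\<Sum>k=1..Suc n. (real n + 1 - real k) * F k) + (\<Sum>k=1..Suc n. F k)"
    by (simp add: sum.distrib[symmetric] algebra_simps)
  then show ?case using Suc by (simp add: sum.cl_ivl_Suc)
qed simp

context spiro_chain
begin

lemma fc_chain:
  assumes "1 \<le> m" "Suc m < N"
  shows "fc (chain_adj H N) c (Suc m) = 5 * real m * real (dist (hex_adj (H m)) (c m) (c (Suc m))) + 9"
proof -
  have m: "1 \<le> m" "m < N" using assms by simp_all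
  note cm = cut_vertex_mem[OF m]
  have cm': "c (Suc m) \<in> hex_verts (H m)" "c (Suc m) \<in> hex_verts (H (Suc m))"
    using cut_vertex_mem[of "Suc m"] assms(2) by simp_all
  have "hex_verts (H (m - 1)) \<inter> hex_verts (H (Suc m)) = {}"
    by (rule hex_disjoint) (use assms in simp_all)
  then have "c m \<noteq> c (Suc m)" using cm(3) cm'(2) by auto
  then have d: "dist (hex_adj (H m)) (c m) (c (Suc m)) \<in> {1, 2, 3}"
    using hex_dist_distinct[OF hex_inj[OF m(2)] cm(2) cm'(1)] by simp
  have "c m \<in> chain_verts H (Suc m)" "c (Suc m) \<in> chain_verts H (Suc m)"
    using cm(2) cm'(1) unfolding chain_verts_Suc by simp_all
  then have "dist (chain_adj H N) (c m) (c (Suc m)) = dist (chain_adj H (Suc m)) (c m) (c (Suc m))"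
    using assms by (intro dist_chain_mono) simp_all
  also have "\<dots> = dist (hex_adj (H m)) (c m) (c (Suc m))"
    using dist_chain_Suc_new[OF m cm(2) cm'(1)] .
  finally show ?thesis using fc_eq_dist[of "Suc m" "chain_adj H N" c] d m(1) by simp
qed

lemma transmission_cut_vertex_closed:
  "1 \<le> m \<Longrightarrow> m < N \<Longrightarrow> chain_transmission m (c m) = (\<Sum>i=1..m. fc (chain_adj H N) c i)"
proof (induction m rule: nat_induct_at_least)
  case base
  then have "c 1 \<in> hex_verts (H 0)" using cut_vertex_mem(3)[of 1] by simp
  then show ?case using transmission_hex[OF hex_inj] base by (simp add: fc_def)
next
  case (Suc m)
  have "c (Suc m) \<in> hex_verts (H m)" using cut_vertex_mem(3)[of "Suc m"] Suc.prems by simp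
  then show ?case
    using transmission_chain_Suc_new[of m] fc_chain[of m] Suc by simp
qed

lemma sum_transmission_closed:
  "1 \<le> m \<Longrightarrow> m \<le> N \<Longrightarrow> (\<Sum>x\<in>chain_verts H m. chain_transmission m x)
    = 10 * (\<Sum>k=1..m-1. \<Sum>i=1..k. fc (chain_adj H N) c i) + 45 * (real m)^2 + 9 * real m"
proof (induction m rule: nat_induct_at_least)
  case base
  have "(\<Sum>x\<in>hex_verts (H 0). transmission (hex_verts (H 0)) (hex_adj (H 0)) x) = 6 * 9"
    using transmission_hex[OF hex_inj] card_hex_verts base by simp
  then show ?case by simp
next
  case (Suc m)
  have m: "1 \<le> m" "m < N" using Suc by simp_all
  have "(\<Sum>k=1..Suc m - 1. \<Sum>i=1..k. fc (chain_adj H N) c i)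
      = (\<Sum>k=1..m-1. \<Sum>i=1..k. fc (chain_adj H N) c i) + (\<Sum>i=1..m. fc (chain_adj H N) c i)"
    using m(1) by (cases m) (simp_all add: sum.cl_ivl_Suc)
  then show ?case
    using sum_transmission_chain_Suc[OF m] transmission_cut_vertex_closed[OF m] Suc
    by (simp add: power2_eq_square algebra_simps)
qed

end

lemma spiro_hex_chain_imp_spiro_chain:
  assumes "spiro_hex_chain V adj n H c"
  shows "spiro_chain n H c" and "V = chain_verts H n" and "adj = chain_adj H n" and "1 \<le> n"
proof -
  show "spiro_chain n H c"
  proof unfold_locales
    fix j k assume "j + 2 \<le> k" "k < n"
    then show "hex_verts (H j) \<inter> hex_verts (H k) = {}"
      using assms unfolding spiro_hex_chain_def hex_verts_def by simp
  qed (use assms in \<open>simp_all add: spiro_hex_chain_def hex_verts_def\<close>)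
  show "V = chain_verts H n" "1 \<le> n"
    using assms unfolding spiro_hex_chain_def chain_verts_def hex_verts_def by simp_all
  show "adj = chain_adj H n"
    using assms unfolding spiro_hex_chain_def chain_adj_def hex_adj_def by (intro ext) simp
qed

theorem theorem2p2:
  fixes V :: "'a set" and adj :: "'a \<Rightarrow> 'a \<Rightarrow> bool" and n :: nat
    and H :: "nat \<Rightarrow> nat \<Rightarrow> 'a" and c :: "nat \<Rightarrow> 'a"
  assumes "spiro_hex_chain V adj n H c"
  shows "wiener V adj = 5 * (\<Sum>k = 1..n - 1. \<Sum>i = 1..k. fc adj c i) + 45 / 2 * (real n)^2 + 9 / 2 * real n
       \<and> wiener V adj = 5 * (\<Sum>k = 1..n - 1. (real n - real k) * fc adj c k) + 45 / 2 * (real n)^2 + 9 / 2 * real n"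
proof -
  note chain = spiro_hex_chain_imp_spiro_chain[OF assms]
  interpret spiro_chain n H c by (rule chain(1))
  have "wiener V adj = (\<Sum>x\<in>V. transmission V adj x) / 2"
    unfolding chain(2,3) by (rule wiener_eq_half_transmission_sum[OF finite_chain_verts chain_dist_sym])
  also have "\<dots> = 5 * (\<Sum>k = 1..n - 1. \<Sum>i = 1..k. fc adj c i) + 45 / 2 * (real n)^2 + 9 / 2 * real n"
    using sum_transmission_closed[OF chain(4) order_refl] unfolding chain(2,3) by simp
  finally show ?thesis
    using sum_partial_sums[of "fc adj c" "n - 1"] chain(4) by (simp add: of_nat_diff)
qed

end
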